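(* Let $B$ be a nonzero real vector space, $\lfloor\cdot,\cdot\rfloor$ a symmetric bilinear form on $B$, $q(b):=\tfrac12\lfloor b,b\rfloor$, and let $A$ be a maximally $q$--positive subset of $B$. Then $\Phi_A$ is a BC--function and ${\cal P}_q(\Phi_A^@)={\cal P}_q(\Phi_A)=A$.
   Context: A subset $A\subset B$ is $q$--positive if $A\ne\emptyset$ and $q(b-c)\ge 0$ for all $b,c\in A$; it is maximally $q$--positive if it is $q$--positive and not properly contained in another $q$--positive set. $\Phi_A(b):=\sup_{a\in A}\big[\lfloor a,b\rfloor-q(a)\big]$ for $b\in B$. For a proper convex $f\colon B\to\,]{-}\infty,\infty]$, $f^@(c):=\sup_{b\in B}[\lfloor b,c\rfloor-f(b)]$. A BC--function is a proper convex $f$ with $f^@(b)\ge f(b)\ge q(b)$ for all $b\in B$. For $h\ge q$, ${\cal P}_q(h):=\{b\colon h(b)=q(b)\}$. *)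

theory Defs
  imports "HOL-Analysis.Analysis" "HOL-Library.Extended_Real"
begin

definition qf :: "('b::real_vector \<Rightarrow> 'b \<Rightarrow> real) \<Rightarrow> 'b \<Rightarrow> real" where
  "qf L b = L b b / 2"

definition q_positive :: "('b::real_vector \<Rightarrow> 'b \<Rightarrow> real) \<Rightarrow> 'b set \<Rightarrow> bool" where
  "q_positive L A \<longleftrightarrow> A \<noteq> {} \<and> (\<forall>b\<in>A. \<forall>c\<in>A. qf L (b - c) \<ge> 0)"

definition max_q_positive :: "('b::real_vector \<Rightarrow> 'b \<Rightarrow> real) \<Rightarrow> 'b set \<Rightarrow> bool" where
  "max_q_positive L A \<longleftrightarrow> q_positive L A \<and> (\<forall>A'. q_positive L A' \<and> A \<subseteq> A' \<longrightarrow> A' = A)"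

definition PhiA :: "('b::real_vector \<Rightarrow> 'b \<Rightarrow> real) \<Rightarrow> 'b set \<Rightarrow> 'b \<Rightarrow> ereal" where
  "PhiA L A b = (SUP a\<in>A. ereal (L a b - qf L a))"

definition proper_convex :: "('b::real_vector \<Rightarrow> ereal) \<Rightarrow> bool" where
  "proper_convex f \<longleftrightarrow> (\<forall>b. f b \<noteq> -\<infinity>) \<and> (\<exists>b. f b \<noteq> \<infinity>) \<and>
     (\<forall>x y t. 0 < t \<and> t < 1 \<longrightarrow>
        f ((1 - t) *\<^sub>R x + t *\<^sub>R y) \<le> ereal (1 - t) * f x + ereal t * f y)"

definition fenchel_L :: "('b::real_vector \<Rightarrow> 'b \<Rightarrow> real) \<Rightarrow> ('b \<Rightarrow> ereal) \<Rightarrow> 'b \<Rightarrow> ereal" where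
  "fenchel_L L f c = (SUP b. ereal (L b c) - f b)"

definition BC_function :: "('b::real_vector \<Rightarrow> 'b \<Rightarrow> real) \<Rightarrow> ('b \<Rightarrow> ereal) \<Rightarrow> bool" where
  "BC_function L f \<longleftrightarrow> proper_convex f \<and>
     (\<forall>b. fenchel_L L f b \<ge> f b \<and> f b \<ge> ereal (qf L b))"

definition Pq :: "('b::real_vector \<Rightarrow> 'b \<Rightarrow> real) \<Rightarrow> ('b \<Rightarrow> ereal) \<Rightarrow> 'b set" where
  "Pq L h = {b. h b = ereal (qf L b)}"

end

theory Submission
  imports Defs
begin

text \<open>
  Since q(a - b) = q(a) + q(b) - L a b, each term L a b - q(a) of the supremum defining
  Phi_A(b) equals q(b) - q(a - b). Hence Phi_A = q on A by q-positivity, while for b outside A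
  maximality yields some a in A with q(a - b) < 0, so that Phi_A(b) > q(b). Being a supremum
  of affine functions, Phi_A is convex. Finally, Phi_A(b) >= L c b - q(c) for c in A gives
  Phi_A^@(c) <= q(c), and Phi_A = q on A gives Phi_A^@ >= Phi_A, so Phi_A^@ touches q exactly
  where Phi_A does.
\<close>

lemma qf_diff:
  assumes "bilinear L" and "\<forall>b c. L b c = L c b"
  shows "qf L (b - c) = qf L b + qf L c - L b c"
  using assms by (simp add: qf_def bilinear_lsub bilinear_rsub field_simps)

lemma qf_diff_commute:
  assumes "bilinear L" and "\<forall>b c. L b c = L c b"
  shows "qf L (b - c) = qf L (c - b)"
  using qf_diff[OF assms] assms(2) by simp

lemma max_q_positive_imp_q_positive: "max_q_positive L A \<Longrightarrow> q_positive L A"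
  unfolding max_q_positive_def by blast

lemma PhiA_upper:
  assumes "a \<in> A"
  shows "ereal (L a b - qf L a) \<le> PhiA L A b"
  unfolding PhiA_def using assms by (rule SUP_upper)

lemma PhiA_eq_qf_of_mem:
  assumes "bilinear L" and "\<forall>b c. L b c = L c b" and "q_positive L A" and "b \<in> A"
  shows "PhiA L A b = ereal (qf L b)"
proof (rule antisym)
  show "PhiA L A b \<le> ereal (qf L b)"
    unfolding PhiA_def
  proof (rule SUP_least)
    fix a assume "a \<in> A"
    with assms(3,4) have "0 \<le> qf L (a - b)"
      unfolding q_positive_def by blast
    then show "ereal (L a b - qf L a) \<le> ereal (qf L b)"
      using qf_diff[OF assms(1,2), of a b] by simp
  qed
  show "ereal (qf L b) \<le> PhiA L A b"
    using PhiA_upper[OF assms(4), of L b] by (simp add: qf_def)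
qed

lemma max_q_positive_obtain_negative:
  assumes "bilinear L" and "\<forall>b c. L b c = L c b" and "max_q_positive L A" and "b \<notin> A"
  obtains a where "a \<in> A" and "qf L (a - b) < 0"
proof -
  have "\<not> q_positive L (insert b A)"
    using assms(3,4) unfolding max_q_positive_def by blast
  then obtain x y where xy: "x \<in> insert b A" "y \<in> insert b A" "qf L (x - y) < 0"
    unfolding q_positive_def by force
  have "x \<noteq> b \<or> y \<noteq> b"
    using xy(3) by (auto simp: qf_def bilinear_lzero[OF assms(1)])
  moreover have "\<not> (x \<in> A \<and> y \<in> A)"
    using xy(3) max_q_positive_imp_q_positive[OF assms(3)] unfolding q_positive_def by force
  ultimately show ?thesis
    using xy that qf_diff_commute[OF assms(1,2)] by auto
qed

lemma PhiA_gt_qf_of_not_mem: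
  assumes "bilinear L" and "\<forall>b c. L b c = L c b" and "max_q_positive L A" and "b \<notin> A"
  shows "ereal (qf L b) < PhiA L A b"
proof -
  obtain a where a: "a \<in> A" "qf L (a - b) < 0"
    using max_q_positive_obtain_negative[OF assms] .
  have "ereal (qf L b) < ereal (L a b - qf L a)"
    using a(2) qf_diff[OF assms(1,2), of a b] by simp
  also have "\<dots> \<le> PhiA L A b"
    using a(1) by (rule PhiA_upper)
  finally show ?thesis .
qed

lemma Pq_PhiA:
  assumes "bilinear L" and "\<forall>b c. L b c = L c b" and "max_q_positive L A"
  shows "Pq L (PhiA L A) = A"
  using PhiA_eq_qf_of_mem[OF assms(1,2) max_q_positive_imp_q_positive[OF assms(3)]]
    PhiA_gt_qf_of_not_mem[OF assms]
  unfolding Pq_def by force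

lemma PhiA_ge_qf:
  assumes "bilinear L" and "\<forall>b c. L b c = L c b" and "max_q_positive L A"
  shows "ereal (qf L b) \<le> PhiA L A b"
  using PhiA_eq_qf_of_mem[OF assms(1,2) max_q_positive_imp_q_positive[OF assms(3)]]
    PhiA_gt_qf_of_not_mem[OF assms, of b]
  by (cases "b \<in> A") auto

lemma PhiA_convex:
  assumes "bilinear L" and "0 \<le> t" and "t \<le> 1"
  shows "PhiA L A ((1 - t) *\<^sub>R x + t *\<^sub>R y)
           \<le> ereal (1 - t) * PhiA L A x + ereal t * PhiA L A y"
  unfolding PhiA_def[of L A "(1 - t) *\<^sub>R x + t *\<^sub>R y"]
proof (rule SUP_least)
  fix a assume a: "a \<in> A"
  have "L a ((1 - t) *\<^sub>R x + t *\<^sub>R y) - qf L a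
          = (1 - t) * (L a x - qf L a) + t * (L a y - qf L a)"
    by (simp only: bilinear_radd[OF assms(1)] bilinear_rmul[OF assms(1)])
      (simp add: algebra_simps)
  then have "ereal (L a ((1 - t) *\<^sub>R x + t *\<^sub>R y) - qf L a)
          = ereal (1 - t) * ereal (L a x - qf L a) + ereal t * ereal (L a y - qf L a)"
    by simp
  also have "\<dots> \<le> ereal (1 - t) * PhiA L A x + ereal t * PhiA L A y"
    using assms(2,3)
    by (intro add_mono ereal_mult_left_mono PhiA_upper[OF a]) simp_all
  finally show "ereal (L a ((1 - t) *\<^sub>R x + t *\<^sub>R y) - qf L a)
          \<le> ereal (1 - t) * PhiA L A x + ereal t * PhiA L A y" .
qed

lemma proper_convex_PhiA:
  assumes "bilinear L" and "\<forall>b c. L b c = L c b" and "max_q_positive L A"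
  shows "proper_convex (PhiA L A)"
proof -
  have qpos: "q_positive L A"
    using assms(3) by (rule max_q_positive_imp_q_positive)
  then obtain a where "a \<in> A"
    unfolding q_positive_def by blast
  then have "PhiA L A a \<noteq> \<infinity>"
    using PhiA_eq_qf_of_mem[OF assms(1,2) qpos] by simp
  moreover have "PhiA L A b \<noteq> -\<infinity>" for b
    using PhiA_ge_qf[OF assms, of b] by auto
  ultimately show ?thesis
    unfolding proper_convex_def using PhiA_convex[OF assms(1)] by force
qed

lemma fenchel_L_PhiA_ge:
  assumes "bilinear L" and "\<forall>b c. L b c = L c b" and "q_positive L A"
  shows "PhiA L A c \<le> fenchel_L L (PhiA L A) c"
  unfolding PhiA_def[of L A c]
proof (rule SUP_least)
  fix a assume "a \<in> A"
  then have "ereal (L a c - qf L a) = ereal (L a c) - PhiA L A a"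
    using PhiA_eq_qf_of_mem[OF assms] by simp
  also have "\<dots> \<le> fenchel_L L (PhiA L A) c"
    unfolding fenchel_L_def by (rule SUP_upper) simp
  finally show "ereal (L a c - qf L a) \<le> fenchel_L L (PhiA L A) c" .
qed

lemma fenchel_L_PhiA_le_qf:
  assumes "\<forall>b c. L b c = L c b" and "c \<in> A"
  shows "fenchel_L L (PhiA L A) c \<le> ereal (qf L c)"
  unfolding fenchel_L_def
proof (rule SUP_least)
  fix b
  have "ereal (L b c) - PhiA L A b \<le> ereal (L b c) - ereal (L c b - qf L c)"
    by (rule ereal_minus_mono) (auto intro: PhiA_upper[OF assms(2)])
  then show "ereal (L b c) - PhiA L A b \<le> ereal (qf L c)"
    using assms(1) by simp
qed

lemma Pq_fenchel_L_PhiA: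
  assumes "bilinear L" and "\<forall>b c. L b c = L c b" and "max_q_positive L A"
  shows "Pq L (fenchel_L L (PhiA L A)) = A"
proof -
  have qpos: "q_positive L A"
    using assms(3) by (rule max_q_positive_imp_q_positive)
  have "fenchel_L L (PhiA L A) c = ereal (qf L c) \<longleftrightarrow> c \<in> A" for c
  proof
    assume "fenchel_L L (PhiA L A) c = ereal (qf L c)"
    then have "PhiA L A c \<le> ereal (qf L c)"
      using fenchel_L_PhiA_ge[OF assms(1,2) qpos, of c] by simp
    then show "c \<in> A"
      using PhiA_gt_qf_of_not_mem[OF assms, of c] by force
  next
    assume "c \<in> A"
    then show "fenchel_L L (PhiA L A) c = ereal (qf L c)"
      using fenchel_L_PhiA_le_qf[OF assms(2)] fenchel_L_PhiA_ge[OF assms(1,2) qpos, of c]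
        PhiA_eq_qf_of_mem[OF assms(1,2) qpos]
      by (metis antisym)
  qed
  then show ?thesis
    unfolding Pq_def by blast
qed

theorem theorem3p11:
  fixes L :: "'b::real_vector \<Rightarrow> 'b \<Rightarrow> real" and A :: "'b set"
  assumes nonzero: "\<exists>b::'b. b \<noteq> 0"
    and bil: "bilinear L"
    and sym: "\<forall>b c. L b c = L c b"
    and maxA: "max_q_positive L A"
  shows "BC_function L (PhiA L A)
    \<and> Pq L (fenchel_L L (PhiA L A)) = Pq L (PhiA L A)
    \<and> Pq L (PhiA L A) = A"
proof -
  have "BC_function L (PhiA L A)"
    unfolding BC_function_def
    using proper_convex_PhiA[OF bil sym maxA] PhiA_ge_qf[OF bil sym maxA]
      fenchel_L_PhiA_ge[OF bil sym max_q_positive_imp_q_positive[OF maxA]]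
    by blast
  then show ?thesis
    using Pq_PhiA[OF bil sym maxA] Pq_fenchel_L_PhiA[OF bil sym maxA] by simp
qed

end
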